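(* Let $M$ be a circulant matrix over $\mathbb{Z}_4+u\mathbb{Z}_4$ of order $n-1$, and let $\alpha,\beta,\gamma\in\mathbb{Z}_4+u\mathbb{Z}_4$ with $\gamma=\pm\beta$. Let $G=[I_n\,|\,B]$, where $B$ is the $n\times n$ matrix whose first row is $(\alpha,\beta,\beta,\dots,\beta)$ and whose remaining rows are $(\gamma\,|\,\text{row } i \text{ of } M)$ for $i=1,\dots,n-1$, i.e. $B=\begin{pmatrix}\alpha & \beta\cdots\beta\\ \gamma\mathbf{1}^T & M\end{pmatrix}$ with $\mathbf{1}$ the all-ones vector of length $n-1$. Then $G$ generates a formally self-dual code of length $2n$ over $\mathbb{Z}_4+u\mathbb{Z}_4$ whose Gray image under $\phi$ is a formally self-dual code over $\mathbb{Z}_4$ of length $4n$.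
   Context: $\mathbb{Z}_4+u\mathbb{Z}_4$ is the commutative ring of characteristic $4$ with $u^2=0$. A linear code over a ring $R$ is an $R$-submodule of $R^N$; duals are taken with respect to the Euclidean inner product $\sum_i x_iy_i$ in $R$. Lee weight on $\mathbb{Z}_4$: $0,1,2,1$ for $0,1,2,3$; on $\mathbb{Z}_4+u\mathbb{Z}_4$: $w_L(a+ub)=w_L(b)+w_L(a+b)$; extended additively to vectors. A linear code (over either ring) is formally self-dual if it has the same Lee weight enumerator as its dual. The Gray map $\phi:(\mathbb{Z}_4+u\mathbb{Z}_4)^{N}\to\mathbb{Z}_4^{2N}$ is $\phi(\overline{a}+u\overline{b})=(\overline{b},\overline{a}+\overline{b})$ for $\overline{a},\overline{b}\in\mathbb{Z}_4^N$. A circulant matrix is one in which each row is the cyclic right shift of the previous row. *)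

theory Defs
  imports Main "HOL-Library.Numeral_Type" "HOL-Library.Product_Plus"
begin

text \<open>The ring Z4 + u Z4 (u^2 = 0): the element a + u b is represented by the pair (a, b)
  with a, b :: 4 (the integers mod 4).  Addition, zero, negation and subtraction are the
  componentwise operations on pairs (HOL-Library.Product_Plus); multiplication is
  (a + u b)(c + u d) = ac + u(ad + bc).\<close>

type_synonym zu4 = "4 \<times> 4"

definition zu_one :: zu4 where "zu_one = (1, 0)"

definition zu_mult :: "zu4 \<Rightarrow> zu4 \<Rightarrow> zu4" where
  "zu_mult x y = (fst x * fst y, fst x * snd y + snd x * fst y)"

definition vadd :: "'a::plus list \<Rightarrow> 'a list \<Rightarrow> 'a list" where
  "vadd x y = map2 (+) x y"

definition zu_smult :: "zu4 \<Rightarrow> zu4 list \<Rightarrow> zu4 list" where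
  "zu_smult r x = map (zu_mult r) x"

definition z4_smult :: "4 \<Rightarrow> 4 list \<Rightarrow> 4 list" where
  "z4_smult r x = map ((*) r) x"

definition zu_inner :: "zu4 list \<Rightarrow> zu4 list \<Rightarrow> zu4" where
  "zu_inner x y = sum_list (map2 zu_mult x y)"

definition z4_inner :: "4 list \<Rightarrow> 4 list \<Rightarrow> 4" where
  "z4_inner x y = sum_list (map2 (*) x y)"

definition linear_code_zu :: "nat \<Rightarrow> zu4 list set \<Rightarrow> bool" where
  "linear_code_zu N C \<longleftrightarrow> C \<subseteq> {v. length v = N} \<and> replicate N 0 \<in> C \<and>
     (\<forall>x\<in>C. \<forall>y\<in>C. vadd x y \<in> C) \<and> (\<forall>r. \<forall>x\<in>C. zu_smult r x \<in> C)"

definition linear_code_z4 :: "nat \<Rightarrow> 4 list set \<Rightarrow> bool" where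
  "linear_code_z4 N C \<longleftrightarrow> C \<subseteq> {v. length v = N} \<and> replicate N 0 \<in> C \<and>
     (\<forall>x\<in>C. \<forall>y\<in>C. vadd x y \<in> C) \<and> (\<forall>r. \<forall>x\<in>C. z4_smult r x \<in> C)"

definition dual_zu :: "nat \<Rightarrow> zu4 list set \<Rightarrow> zu4 list set" where
  "dual_zu N C = {y. length y = N \<and> (\<forall>c\<in>C. zu_inner c y = 0)}"

definition dual_z4 :: "nat \<Rightarrow> 4 list set \<Rightarrow> 4 list set" where
  "dual_z4 N C = {y. length y = N \<and> (\<forall>c\<in>C. z4_inner c y = 0)}"

definition lee_z4 :: "4 \<Rightarrow> nat" where
  "lee_z4 x = (if x = 0 then 0 else if x = 2 then 2 else 1)"

definition lee_zu :: "zu4 \<Rightarrow> nat" where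
  "lee_zu x = lee_z4 (snd x) + lee_z4 (fst x + snd x)"

definition lee_wt_z4 :: "4 list \<Rightarrow> nat" where
  "lee_wt_z4 v = sum_list (map lee_z4 v)"

definition lee_wt_zu :: "zu4 list \<Rightarrow> nat" where
  "lee_wt_zu v = sum_list (map lee_zu v)"

definition same_weight_enum :: "('v \<Rightarrow> nat) \<Rightarrow> 'v set \<Rightarrow> 'v set \<Rightarrow> bool" where
  "same_weight_enum wt C D \<longleftrightarrow> (\<forall>w. card {c\<in>C. wt c = w} = card {c\<in>D. wt c = w})"

definition formally_self_dual_zu :: "nat \<Rightarrow> zu4 list set \<Rightarrow> bool" where
  "formally_self_dual_zu N C \<longleftrightarrow>
     linear_code_zu N C \<and> same_weight_enum lee_wt_zu C (dual_zu N C)"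

definition formally_self_dual_z4 :: "nat \<Rightarrow> 4 list set \<Rightarrow> bool" where
  "formally_self_dual_z4 N C \<longleftrightarrow>
     linear_code_z4 N C \<and> same_weight_enum lee_wt_z4 C (dual_z4 N C)"

definition gray :: "zu4 list \<Rightarrow> 4 list" where
  "gray v = map snd v @ map (\<lambda>x. fst x + snd x) v"

text \<open>Matrices are functions nat \<Rightarrow> nat \<Rightarrow> zu4 (only entries within the bounds matter).\<close>

definition code_gen :: "nat \<Rightarrow> nat \<Rightarrow> (nat \<Rightarrow> nat \<Rightarrow> zu4) \<Rightarrow> zu4 list set" where
  "code_gen k N G = {map (\<lambda>j. \<Sum>i<k. zu_mult (x ! i) (G i j)) [0..<N] | x. length x = k}"

definition circulant :: "nat \<Rightarrow> (nat \<Rightarrow> nat \<Rightarrow> 'a) \<Rightarrow> bool" where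
  "circulant m M \<longleftrightarrow> (\<forall>i j. Suc i < m \<and> j < m \<longrightarrow> M (Suc i) j = M i ((j + m - 1) mod m))"

definition bordered :: "zu4 \<Rightarrow> zu4 \<Rightarrow> zu4 \<Rightarrow> (nat \<Rightarrow> nat \<Rightarrow> zu4) \<Rightarrow> nat \<Rightarrow> nat \<Rightarrow> zu4" where
  "bordered \<alpha> \<beta> \<gamma> M i j =
     (if i = 0 \<and> j = 0 then \<alpha> else if i = 0 then \<beta> else if j = 0 then \<gamma> else M (i - 1) (j - 1))"

definition gen_matrix :: "nat \<Rightarrow> (nat \<Rightarrow> nat \<Rightarrow> zu4) \<Rightarrow> nat \<Rightarrow> nat \<Rightarrow> zu4" where
  "gen_matrix n B i j = (if j < n then (if i = j then zu_one else 0) else B i (j - n))"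

end

theory Submission
  imports Defs
begin

text \<open>Let \<open>C\<close> be the code generated by \<open>[I | B]\<close>. Its dual is generated by \<open>[-B^T | I]\<close>,
  which after swapping and negating halves has the Lee weights of the code generated by
  \<open>[I | B^T]\<close>. A circulant matrix is persymmetric, so for the bordered matrix with
  \<open>\<gamma> = \<plusminus>\<beta>\<close> we get \<open>B^T = D P B P D\<close>, where \<open>P\<close> fixes the border index and reverses the
  others modulo \<open>n - 1\<close>, and \<open>D = diag(\<plusminus>1, 1, \<dots>, 1)\<close> repairs the sign of the border. The
  monomial map \<open>D P\<close> applied to both halves is a Lee isometry from the code of \<open>[I | B]\<close> onto
  that of \<open>[I | B^T]\<close>, so \<open>C\<close> is formally self-dual.

  For the Gray image, \<open>\<langle>\<phi> x, \<phi> y\<rangle> = a + b\<close> whenever \<open>\<langle>x, \<theta> y\<rangle> = a + u b\<close>, where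
  \<open>\<theta> (c + u d) = (c + 2 d) - u d\<close>. Since \<open>C\<close> is closed under multiplication by \<open>u\<close>, which
  extracts \<open>a\<close>, this gives \<open>\<phi>(C)^\<bottom> = \<phi>(\<theta>(C^\<bottom>))\<close>; as \<open>\<phi>\<close> and \<open>\<theta>\<close> preserve Lee weight,
  formal self-duality passes from \<open>C\<close> to \<open>\<phi>(C)\<close>.\<close>

lemma zu_mult_simps [simp]:
  "fst (zu_mult x y) = fst x * fst y"
  "snd (zu_mult x y) = fst x * snd y + snd x * fst y"
  by (simp_all add: zu_mult_def)

lemma zu_mult_one [simp]: "zu_mult x zu_one = x" "zu_mult zu_one x = x"
  by (simp_all add: prod_eq_iff zu_one_def)

lemma zu_mult_zero [simp]: "zu_mult x 0 = 0" "zu_mult 0 x = 0"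
  by (simp_all add: prod_eq_iff)

lemma zu_mult_commute: "zu_mult x y = zu_mult y x"
  by (simp add: prod_eq_iff algebra_simps)

lemma zu_mult_assoc: "zu_mult (zu_mult x y) z = zu_mult x (zu_mult y z)"
  by (simp add: prod_eq_iff algebra_simps)

lemma zu_mult_add_right: "zu_mult x (y + z) = zu_mult x y + zu_mult x z"
  by (simp add: prod_eq_iff algebra_simps)

lemma zu_mult_add_left: "zu_mult (x + y) z = zu_mult x z + zu_mult y z"
  by (simp add: prod_eq_iff algebra_simps)

lemma zu_mult_minus_right: "zu_mult x (- y) = - zu_mult x y"
  by (simp add: prod_eq_iff algebra_simps)

lemma zu_mult_minus_left: "zu_mult (- x) y = - zu_mult x y"
  by (simp add: prod_eq_iff algebra_simps)

lemma zu_mult_sum_right: "zu_mult x (sum f A) = (\<Sum>i\<in>A. zu_mult x (f i))"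
  by (simp add: prod_eq_iff fst_sum snd_sum sum_distrib_left sum.distrib)

lemma zu_mult_sum_left: "zu_mult (sum f A) x = (\<Sum>i\<in>A. zu_mult (f i) x)"
  by (simp add: prod_eq_iff fst_sum snd_sum sum_distrib_right sum.distrib)

lemma z4_exhaust: "(x::4) = 0 \<or> x = 1 \<or> x = 2 \<or> x = 3"
proof (cases x)
  case (of_int z)
  then have "z = 0 \<or> z = 1 \<or> z = 2 \<or> z = 3" by auto
  then show ?thesis using of_int by auto
qed

lemma lee_z4_minus [simp]: "lee_z4 (- x) = lee_z4 x"
  using z4_exhaust[of x] by (auto simp: lee_z4_def)

lemma lee_zu_minus [simp]: "lee_zu (- x) = lee_zu x"
proof -
  have "fst (- x) + snd (- x) = - (fst x + snd x)"
    by simp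
  then show ?thesis
    unfolding lee_zu_def by (simp only: snd_uminus lee_z4_minus)
qed

lemma lee_wt_zu_append [simp]: "lee_wt_zu (xs @ ys) = lee_wt_zu xs + lee_wt_zu ys"
  by (simp add: lee_wt_zu_def)

lemma lee_wt_zu_map_minus [simp]: "lee_wt_zu (map uminus xs) = lee_wt_zu xs"
  by (simp add: lee_wt_zu_def comp_def)

lemma lee_wt_zu_conv_sum: "lee_wt_zu xs = (\<Sum>i<length xs. lee_zu (xs ! i))"
  by (simp add: lee_wt_zu_def sum_list_sum_nth atLeast0LessThan)

lemma zu_inner_conv_sum:
  "length xs = length ys \<Longrightarrow> zu_inner xs ys = (\<Sum>i<length xs. zu_mult (xs ! i) (ys ! i))"
  by (simp add: zu_inner_def sum_list_sum_nth atLeast0LessThan)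

lemma zu_inner_append:
  "length xs = length ys \<Longrightarrow> zu_inner (xs @ xs') (ys @ ys') = zu_inner xs ys + zu_inner xs' ys'"
  by (simp add: zu_inner_def)

lemma zu_inner_smult_left: "zu_inner (zu_smult r xs) ys = zu_mult r (zu_inner xs ys)"
  by (induction xs ys rule: list_induct2')
     (simp_all add: zu_inner_def zu_smult_def zu_mult_add_right zu_mult_assoc)

lemma card_weight_class_image:
  assumes "inj_on h X" and "\<And>x. x \<in> X \<Longrightarrow> wt' (h x) = wt x"
  shows "card {y \<in> h ` X. wt' y = w} = card {x \<in> X. wt x = w}"
proof -
  have "{y \<in> h ` X. wt' y = w} = h ` {x \<in> X. wt x = w}"
    using assms(2) by auto
  then show ?thesis
    using assms(1) by (simp add: card_image inj_on_subset)
qed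

lemma same_weight_enum_sym: "same_weight_enum wt C D \<Longrightarrow> same_weight_enum wt D C"
  by (simp add: same_weight_enum_def)

lemma same_weight_enum_trans:
  "same_weight_enum wt C D \<Longrightarrow> same_weight_enum wt D E \<Longrightarrow> same_weight_enum wt C E"
  by (simp add: same_weight_enum_def)

lemma same_weight_enum_image:
  assumes "inj_on h C" and "\<And>x. x \<in> C \<Longrightarrow> wt (h x) = wt x"
  shows "same_weight_enum wt (h ` C) C"
  using card_weight_class_image[of h C wt wt, OF assms] by (simp add: same_weight_enum_def)

lemma same_weight_enum_map_image:
  assumes "same_weight_enum wt C D"
    and "inj_on h C" "inj_on h D"
    and "\<And>x. x \<in> C \<union> D \<Longrightarrow> wt' (h x) = wt x"
  shows "same_weight_enum wt' (h ` C) (h ` D)"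
  using assms card_weight_class_image[of h C wt' wt] card_weight_class_image[of h D wt' wt]
  by (simp add: same_weight_enum_def)

definition vec_mat :: "nat \<Rightarrow> zu4 list \<Rightarrow> (nat \<Rightarrow> nat \<Rightarrow> zu4) \<Rightarrow> zu4 list" where
  "vec_mat n x A = map (\<lambda>j. \<Sum>i<n. zu_mult (x ! i) (A i j)) [0..<n]"

definition systematic_code :: "nat \<Rightarrow> (nat \<Rightarrow> nat \<Rightarrow> zu4) \<Rightarrow> zu4 list set" where
  "systematic_code n A = (\<lambda>x. x @ vec_mat n x A) ` {x. length x = n}"

definition mat_transpose :: "(nat \<Rightarrow> nat \<Rightarrow> 'a) \<Rightarrow> nat \<Rightarrow> nat \<Rightarrow> 'a" where
  "mat_transpose A i j = A j i"

lemma length_vec_mat [simp]: "length (vec_mat n x A) = n"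
  by (simp add: vec_mat_def)

lemma nth_vec_mat: "j < n \<Longrightarrow> vec_mat n x A ! j = (\<Sum>i<n. zu_mult (x ! i) (A i j))"
  by (simp add: vec_mat_def)

lemma length_systematic_code: "v \<in> systematic_code n A \<Longrightarrow> length v = 2 * n"
  by (auto simp: systematic_code_def)

lemma sum_zu_mult_delta:
  fixes n :: nat
  assumes "j < n"
  shows "(\<Sum>i<n. zu_mult (f i) (if i = j then r else 0)) = zu_mult (f j) r"
    and "(\<Sum>i<n. zu_mult (if i = j then r else 0) (f i)) = zu_mult r (f j)"
proof -
  have delta: "(\<Sum>i<n. if i = j then g i else 0) = (g j :: zu4)" for g
    using assms by (subst sum.delta) auto
  show "(\<Sum>i<n. zu_mult (f i) (if i = j then r else 0)) = zu_mult (f j) r"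
    using delta[of "\<lambda>i. zu_mult (f i) r"]
    by (simp add: if_distrib[of "zu_mult _"] cong: if_cong)
  show "(\<Sum>i<n. zu_mult (if i = j then r else 0) (f i)) = zu_mult r (f j)"
    using delta[of "\<lambda>i. zu_mult r (f i)"]
    by (simp add: if_distrib[of "\<lambda>y. zu_mult y _"] cong: if_cong)
qed

lemma code_gen_systematic: "code_gen n (2 * n) (gen_matrix n A) = systematic_code n A"
proof -
  have "map (\<lambda>j. \<Sum>i<n. zu_mult (x ! i) (gen_matrix n A i j)) [0..<2 * n] = x @ vec_mat n x A"
    if "length x = n" for x
  proof (rule nth_equalityI)
    fix k assume "k < length (map (\<lambda>j. \<Sum>i<n. zu_mult (x ! i) (gen_matrix n A i j)) [0..<2 * n])"
    then show "map (\<lambda>j. \<Sum>i<n. zu_mult (x ! i) (gen_matrix n A i j)) [0..<2 * n] ! k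
        = (x @ vec_mat n x A) ! k"
      using that
      by (cases "k < n") (simp_all add: nth_append nth_vec_mat gen_matrix_def sum_zu_mult_delta)
  qed (simp add: that)
  then show ?thesis
    unfolding code_gen_def systematic_code_def setcompr_eq_image by (auto intro: image_cong)
qed

lemma vec_mat_vadd:
  "length x = n \<Longrightarrow> length y = n \<Longrightarrow>
    vec_mat n (vadd x y) A = vadd (vec_mat n x A) (vec_mat n y A)"
  by (rule nth_equalityI) (auto simp: vadd_def nth_vec_mat zu_mult_add_left sum.distrib)

lemma vec_mat_smult:
  "length x = n \<Longrightarrow> vec_mat n (zu_smult r x) A = zu_smult r (vec_mat n x A)"
  by (rule nth_equalityI) (auto simp: zu_smult_def nth_vec_mat zu_mult_sum_right zu_mult_assoc)

lemma linear_systematic_code: "linear_code_zu (2 * n) (systematic_code n A)"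
  unfolding linear_code_zu_def
proof (intro conjI ballI allI)
  show "systematic_code n A \<subseteq> {v. length v = 2 * n}"
    by (auto simp: length_systematic_code)
  have "replicate (2 * n) 0 = replicate n 0 @ vec_mat n (replicate n 0) A"
    by (rule nth_equalityI) (auto simp: nth_append nth_vec_mat)
  then show "replicate (2 * n) 0 \<in> systematic_code n A"
    unfolding systematic_code_def by force
next
  fix v w assume "v \<in> systematic_code n A" "w \<in> systematic_code n A"
  then obtain x y where "v = x @ vec_mat n x A" "w = y @ vec_mat n y A" "length x = n" "length y = n"
    by (auto simp: systematic_code_def)
  then show "vadd v w \<in> systematic_code n A"
    unfolding systematic_code_def
    by (auto simp: vadd_def vec_mat_vadd[unfolded vadd_def] intro!: image_eqI[of _ _ "vadd x y"])
next
  fix r v assume "v \<in> systematic_code n A"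
  then obtain x where "v = x @ vec_mat n x A" "length x = n"
    by (auto simp: systematic_code_def)
  then show "zu_smult r v \<in> systematic_code n A"
    unfolding systematic_code_def
    by (auto simp: zu_smult_def vec_mat_smult[unfolded zu_smult_def]
        intro!: image_eqI[of _ _ "zu_smult r x"])
qed

lemma zu_inner_systematic:
  assumes "length x = n" "length y = n" "length z = n"
  shows "zu_inner (x @ vec_mat n x A) (y @ z)
    = (\<Sum>i<n. zu_mult (x ! i) (y ! i + (\<Sum>k<n. zu_mult (A i k) (z ! k))))"
proof -
  have "zu_inner (vec_mat n x A) z = (\<Sum>k<n. \<Sum>i<n. zu_mult (x ! i) (zu_mult (A i k) (z ! k)))"
    using assms by (simp add: zu_inner_conv_sum nth_vec_mat zu_mult_sum_left zu_mult_assoc)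
  also have "\<dots> = (\<Sum>i<n. zu_mult (x ! i) (\<Sum>k<n. zu_mult (A i k) (z ! k)))"
    by (subst sum.swap) (simp add: zu_mult_sum_right)
  moreover have "zu_inner (x @ vec_mat n x A) (y @ z) = zu_inner x y + zu_inner (vec_mat n x A) z"
    using assms by (simp add: zu_inner_append)
  ultimately show ?thesis
    using assms by (simp add: zu_inner_conv_sum zu_mult_add_right sum.distrib)
qed

lemma dual_systematic_code:
  "dual_zu (2 * n) (systematic_code n A)
     = (\<lambda>v. map uminus (drop n v) @ take n v) ` systematic_code n (mat_transpose A)"
    (is "?D = ?swap ` _")
proof -
  let ?dual_gen = "\<lambda>z. map uminus (vec_mat n z (mat_transpose A)) @ z"
  have "?swap ` systematic_code n (mat_transpose A) = ?dual_gen ` {z. length z = n}"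
    unfolding systematic_code_def image_image by (auto intro: image_cong)
  also have "\<dots> = ?D"
  proof (intro equalityI subsetI)
    fix v assume "v \<in> ?dual_gen ` {z. length z = n}"
    then obtain z where v: "v = ?dual_gen z" "length z = n"
      by blast
    have "zu_inner c v = 0" if "c \<in> systematic_code n A" for c
    proof -
      obtain x where "c = x @ vec_mat n x A" "length x = n"
        using \<open>c \<in> systematic_code n A\<close> by (auto simp: systematic_code_def)
      then show ?thesis
        using v by (simp add: zu_inner_systematic nth_vec_mat mat_transpose_def zu_mult_commute)
    qed
    then show "v \<in> ?D"
      using v by (simp add: dual_zu_def)
  next
    fix v assume v: "v \<in> ?D"
    then have "length v = 2 * n" by (simp add: dual_zu_def)
    define y z where "y = take n v" and "z = drop n v"
    have yz: "v = y @ z" "length y = n" "length z = n"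
      using \<open>length v = 2 * n\<close> by (simp_all add: y_def z_def)
    have "y ! j + (\<Sum>k<n. zu_mult (A j k) (z ! k)) = 0" if "j < n" for j
    proof -
      define e where "e = map (\<lambda>i. if i = j then zu_one else 0) [0..<n]"
      have "e @ vec_mat n e A \<in> systematic_code n A"
        by (auto simp: systematic_code_def e_def)
      then have "zu_inner (e @ vec_mat n e A) (y @ z) = 0"
        using v yz by (simp add: dual_zu_def)
      then show ?thesis
        using that yz by (simp add: zu_inner_systematic e_def sum_zu_mult_delta)
    qed
    then have "y = map uminus (vec_mat n z (mat_transpose A))"
      by (intro nth_equalityI)
         (auto simp: yz nth_vec_mat mat_transpose_def zu_mult_commute eq_neg_iff_add_eq_0)
    then show "v \<in> ?dual_gen ` {z. length z = n}"
      using yz by blast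
  qed
  finally show ?thesis ..
qed

lemma same_weight_enum_dual_systematic:
  "same_weight_enum lee_wt_zu (dual_zu (2 * n) (systematic_code n A))
     (systematic_code n (mat_transpose A))"
  unfolding dual_systematic_code
proof (rule same_weight_enum_image)
  show "inj_on (\<lambda>v. map uminus (drop n v) @ take n v) (systematic_code n (mat_transpose A))"
    by (rule inj_on_inverseI[where g = "\<lambda>u. drop n u @ map uminus (take n u)"])
       (simp add: length_systematic_code comp_def)
next
  fix v assume "v \<in> systematic_code n (mat_transpose A)"
  then obtain x where "v = x @ vec_mat n x (mat_transpose A)" "length x = n"
    by (auto simp: systematic_code_def)
  then show "lee_wt_zu (map uminus (drop n v) @ take n v) = lee_wt_zu v"
    by simp
qed

definition negate_if :: "bool \<Rightarrow> 'a::uminus \<Rightarrow> 'a" where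
  "negate_if b y = (if b then - y else y)"

lemma negate_if_negate_if [simp]: "negate_if b (negate_if b (y::'a::group_add)) = y"
  by (simp add: negate_if_def)

lemma lee_zu_negate_if [simp]: "lee_zu (negate_if b y) = lee_zu y"
  by (simp add: negate_if_def)

lemma zu_mult_negate_if_cancel:
  "zu_mult (negate_if a x) (negate_if a (negate_if b y)) = negate_if b (zu_mult x y)"
  by (simp add: negate_if_def zu_mult_minus_left zu_mult_minus_right)

lemma negate_if_sum: "negate_if b (sum f A :: 'a::ab_group_add) = (\<Sum>i\<in>A. negate_if b (f i))"
  by (simp add: negate_if_def sum_negf)

definition signed_perm :: "(nat \<Rightarrow> nat) \<Rightarrow> (nat \<Rightarrow> bool) \<Rightarrow> zu4 list \<Rightarrow> zu4 list" where
  "signed_perm \<sigma> e v = map (\<lambda>i. negate_if (e i) (v ! \<sigma> i)) [0..<length v]"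

lemma length_signed_perm [simp]: "length (signed_perm \<sigma> e v) = length v"
  by (simp add: signed_perm_def)

lemma nth_signed_perm: "i < length v \<Longrightarrow> signed_perm \<sigma> e v ! i = negate_if (e i) (v ! \<sigma> i)"
  by (simp add: signed_perm_def)

locale signed_involution =
  fixes n :: nat and \<sigma> :: "nat \<Rightarrow> nat" and e :: "nat \<Rightarrow> bool"
  assumes perm_less: "i < n \<Longrightarrow> \<sigma> i < n"
    and perm_involutive: "i < n \<Longrightarrow> \<sigma> (\<sigma> i) = i"
    and sign_invariant: "i < n \<Longrightarrow> e (\<sigma> i) = e i"
begin

lemma sum_perm: "(\<Sum>i<n. f (\<sigma> i)) = (\<Sum>i<n. f i)"
proof -
  have "bij_betw \<sigma> {..<n} {..<n}"
    by (rule bij_betw_byWitness[where f' = \<sigma>]) (auto simp: perm_less perm_involutive)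
  then show ?thesis by (rule sum.reindex_bij_betw)
qed

lemma signed_perm_signed_perm: "length v = n \<Longrightarrow> signed_perm \<sigma> e (signed_perm \<sigma> e v) = v"
  by (rule nth_equalityI)
     (simp_all add: nth_signed_perm perm_less perm_involutive sign_invariant)

lemma lee_wt_signed_perm: "length v = n \<Longrightarrow> lee_wt_zu (signed_perm \<sigma> e v) = lee_wt_zu v"
  using sum_perm[of "\<lambda>i. lee_zu (v ! i)"] by (simp add: lee_wt_zu_conv_sum nth_signed_perm)

lemma vec_mat_signed_perm:
  assumes "\<And>i j. i < n \<Longrightarrow> j < n \<Longrightarrow>
      A i j = negate_if (e i) (negate_if (e j) (B (\<sigma> i) (\<sigma> j)))"
    and "length x = n"
  shows "vec_mat n (signed_perm \<sigma> e x) A = signed_perm \<sigma> e (vec_mat n x B)"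
proof (rule nth_equalityI)
  fix j assume "j < length (vec_mat n (signed_perm \<sigma> e x) A)"
  then have j: "j < n" by simp
  have "vec_mat n (signed_perm \<sigma> e x) A ! j
      = (\<Sum>i<n. negate_if (e j) (zu_mult (x ! \<sigma> i) (B (\<sigma> i) (\<sigma> j))))"
    using j assms by (intro trans[OF nth_vec_mat sum.cong])
      (simp_all add: nth_signed_perm zu_mult_negate_if_cancel)
  also have "\<dots> = negate_if (e j) (\<Sum>i<n. zu_mult (x ! i) (B i (\<sigma> j)))"
    by (simp add: sum_perm[of "\<lambda>i. negate_if (e j) (zu_mult (x ! i) (B i (\<sigma> j)))"]
        negate_if_sum)
  also have "\<dots> = signed_perm \<sigma> e (vec_mat n x B) ! j"
    using j by (simp add: nth_signed_perm nth_vec_mat perm_less)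
  finally show "vec_mat n (signed_perm \<sigma> e x) A ! j = signed_perm \<sigma> e (vec_mat n x B) ! j" .
qed simp

lemma same_weight_enum_systematic_conj:
  assumes "\<And>i j. i < n \<Longrightarrow> j < n \<Longrightarrow>
      A i j = negate_if (e i) (negate_if (e j) (B (\<sigma> i) (\<sigma> j)))"
  shows "same_weight_enum lee_wt_zu (systematic_code n A) (systematic_code n B)"
proof -
  let ?h = "\<lambda>v. signed_perm \<sigma> e (take n v) @ signed_perm \<sigma> e (drop n v)"
  have "signed_perm \<sigma> e ` {x. length x = n} = {x. length x = n}"
  proof (intro equalityI subsetI)
    fix x :: "zu4 list" assume "x \<in> {x. length x = n}"
    then show "x \<in> signed_perm \<sigma> e ` {x. length x = n}"
      by (intro image_eqI[of _ _ "signed_perm \<sigma> e x"]) (simp_all add: signed_perm_signed_perm)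
  qed auto
  then have "systematic_code n A
      = (\<lambda>x. x @ vec_mat n x A) ` signed_perm \<sigma> e ` {x. length x = n}"
    unfolding systematic_code_def by simp
  also have "\<dots> = ?h ` systematic_code n B"
    unfolding systematic_code_def image_image using vec_mat_signed_perm[OF assms]
    by (auto intro: image_cong)
  finally have "systematic_code n A = ?h ` systematic_code n B" .
  moreover have "inj_on ?h (systematic_code n B)"
  proof (rule inj_onI)
    fix v w assume "v \<in> systematic_code n B" "w \<in> systematic_code n B" and h: "?h v = ?h w"
    then obtain x y where v: "v = x @ vec_mat n x B" "length x = n"
      and w: "w = y @ vec_mat n y B" "length y = n"
      by (auto simp: systematic_code_def)
    have "signed_perm \<sigma> e x = take n (?h v)"
      using v by simp
    also have "\<dots> = signed_perm \<sigma> e y"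
      using h w by simp
    finally have "x = y"
      using v w by (metis signed_perm_signed_perm)
    then show "v = w"
      using v w by simp
  qed
  moreover have "lee_wt_zu (?h v) = lee_wt_zu v" if "v \<in> systematic_code n B" for v
  proof -
    obtain x where "v = x @ vec_mat n x B" "length x = n"
      using \<open>v \<in> systematic_code n B\<close> by (auto simp: systematic_code_def)
    then show ?thesis
      by (simp add: lee_wt_signed_perm)
  qed
  ultimately show ?thesis
    using same_weight_enum_image[of ?h "systematic_code n B" lee_wt_zu] by simp
qed

lemma formally_self_dual_systematic:
  assumes "\<And>i j. i < n \<Longrightarrow> j < n \<Longrightarrow>
      mat_transpose B i j = negate_if (e i) (negate_if (e j) (B (\<sigma> i) (\<sigma> j)))"
  shows "formally_self_dual_zu (2 * n) (systematic_code n B)"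
  unfolding formally_self_dual_zu_def
proof
  show "linear_code_zu (2 * n) (systematic_code n B)"
    by (rule linear_systematic_code)
  show "same_weight_enum lee_wt_zu (systematic_code n B) (dual_zu (2 * n) (systematic_code n B))"
    using same_weight_enum_dual_systematic same_weight_enum_systematic_conj[OF assms]
    by (blast intro: same_weight_enum_sym same_weight_enum_trans)
qed

end

lemma circulant_entry:
  assumes "circulant m M" and "a < m" and "b < m"
  shows "M a b = M 0 ((b + (m - a)) mod m)"
  using assms(2,3)
proof (induction a arbitrary: b)
  case (Suc a)
  have "M (Suc a) b = M a ((b + m - 1) mod m)"
    using assms(1) Suc.prems by (simp add: circulant_def)
  also have "\<dots> = M 0 (((b + m - 1) mod m + (m - a)) mod m)"
    using Suc by simp
  also have "((b + m - 1) mod m + (m - a)) mod m = (b + m - 1 + (m - a)) mod m"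
    by (rule mod_add_left_eq)
  also have "b + m - 1 + (m - a) = b + (m - Suc a) + m"
    using Suc.prems by simp
  finally show ?case by simp
qed simp

lemma minus_mod_minus_mod:
  fixes a b m :: nat
  assumes "a < m"
  shows "((m - b) mod m + (m - (m - a) mod m)) mod m = (a + (m - b)) mod m"
proof (cases "a = 0")
  case False
  then have "((m - b) mod m + (m - (m - a) mod m)) mod m = ((m - b) mod m + a) mod m"
    using assms by simp
  also have "\<dots> = (a + (m - b)) mod m"
    by (simp add: mod_add_left_eq mod_add_right_eq add.commute)
  finally show ?thesis .
qed simp

lemma circulant_transpose:
  assumes "circulant m M" and "a < m" and "b < m"
  shows "M b a = M ((m - a) mod m) ((m - b) mod m)"
proof -
  have "m > 0"
    using assms(2) by simp
  have "M b a = M 0 ((a + (m - b)) mod m)"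
    using circulant_entry[OF assms(1,3,2)] .
  also have "(a + (m - b)) mod m = ((m - b) mod m + (m - (m - a) mod m)) mod m"
    using minus_mod_minus_mod[OF assms(2)] by (rule sym)
  also have "M 0 \<dots> = M ((m - a) mod m) ((m - b) mod m)"
    by (rule circulant_entry[symmetric, OF assms(1)]) (simp_all add: \<open>m > 0\<close>)
  finally show ?thesis .
qed

definition border_reflect :: "nat \<Rightarrow> nat \<Rightarrow> nat" where
  "border_reflect m i = (if i = 0 then 0 else Suc ((m - (i - 1)) mod m))"

lemma signed_involution_border_reflect:
  "signed_involution (Suc m) (border_reflect m) (\<lambda>i. i = 0 \<and> b)"
proof
  fix i assume "i < Suc m"
  then show "border_reflect m i < Suc m"
    by (cases "i = 0") (auto simp: border_reflect_def)
  show "border_reflect m (border_reflect m i) = i"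
    using \<open>i < Suc m\<close> by (cases "i = 1") (auto simp: border_reflect_def)
  show "(border_reflect m i = 0 \<and> b) = (i = 0 \<and> b)"
    by (simp add: border_reflect_def)
qed

lemma bordered_transpose:
  assumes "circulant m M" and "\<gamma> = \<beta> \<or> \<gamma> = - \<beta>" and "i < Suc m" and "j < Suc m"
  shows "mat_transpose (bordered \<alpha> \<beta> \<gamma> M) i j
    = negate_if (i = 0 \<and> \<gamma> \<noteq> \<beta>) (negate_if (j = 0 \<and> \<gamma> \<noteq> \<beta>)
        (bordered \<alpha> \<beta> \<gamma> M (border_reflect m i) (border_reflect m j)))"
proof (cases "i = 0 \<or> j = 0")
  case True
  then show ?thesis
    using assms(2)
    by (auto simp: mat_transpose_def bordered_def border_reflect_def negate_if_def)
next
  case False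
  then have "i - 1 < m" "j - 1 < m"
    using assms(3,4) by auto
  then show ?thesis
    using False assms(1) circulant_transpose[of m M "i - 1" "j - 1"]
    by (simp add: mat_transpose_def bordered_def border_reflect_def negate_if_def)
qed

definition gray_inv :: "4 list \<Rightarrow> zu4 list" where
  "gray_inv y = map (\<lambda>k. (y ! (length y div 2 + k) - y ! k, y ! k)) [0..<length y div 2]"

lemma length_gray [simp]: "length (gray v) = 2 * length v"
  by (simp add: gray_def)

lemma gray_inv_gray [simp]: "gray_inv (gray v) = v"
  by (rule nth_equalityI) (simp_all add: gray_inv_def gray_def nth_append prod_eq_iff)

lemma gray_gray_inv: "length y = 2 * N \<Longrightarrow> gray (gray_inv y) = y"
  by (rule nth_equalityI) (auto simp: gray_inv_def gray_def nth_append)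

lemma inj_gray: "inj gray"
  by (rule injI) (metis gray_inv_gray)

lemma lee_wt_z4_gray: "lee_wt_z4 (gray v) = lee_wt_zu v"
  by (induction v) (simp_all add: lee_wt_z4_def lee_wt_zu_def gray_def lee_zu_def)

lemma gray_vadd: "length v = length w \<Longrightarrow> gray (vadd v w) = vadd (gray v) (gray w)"
  by (induction v w rule: list_induct2) (simp_all add: gray_def vadd_def)

lemma gray_smult: "gray (zu_smult (r, 0) v) = z4_smult r (gray v)"
  by (simp add: gray_def z4_smult_def zu_smult_def comp_def algebra_simps)

lemma linear_code_gray:
  assumes "linear_code_zu N C"
  shows "linear_code_z4 (2 * N) (gray ` C)"
proof -
  have len: "C \<subseteq> {v. length v = N}" and zero: "replicate N 0 \<in> C"
    and add: "\<And>v w. v \<in> C \<Longrightarrow> w \<in> C \<Longrightarrow> vadd v w \<in> C"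
    and smult: "\<And>r v. v \<in> C \<Longrightarrow> zu_smult r v \<in> C"
    using assms unfolding linear_code_zu_def by blast+
  show ?thesis
    unfolding linear_code_z4_def
  proof (intro conjI ballI allI)
    show "gray ` C \<subseteq> {v. length v = 2 * N}"
      using len by auto
    have "gray (replicate N 0) = replicate (2 * N) 0"
      by (simp add: gray_def mult_2 replicate_add)
    then show "replicate (2 * N) 0 \<in> gray ` C"
      using zero by (metis image_eqI)
  next
    fix x y assume "x \<in> gray ` C" "y \<in> gray ` C"
    then obtain v w where vw: "v \<in> C" "w \<in> C" and "x = gray v" "y = gray w"
      by blast
    moreover have "length v = length w"
      using len vw by auto
    ultimately have "vadd x y = gray (vadd v w)"
      by (simp add: gray_vadd)
    then show "vadd x y \<in> gray ` C"
      using add vw by blast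
  next
    fix r x assume "x \<in> gray ` C"
    then obtain v where "v \<in> C" "x = gray v"
      by blast
    then show "z4_smult r x \<in> gray ` C"
      using smult[of v "(r, 0)"] by (simp add: gray_smult[symmetric])
  qed
qed

text \<open>The Gray map carries the Euclidean inner product of \<open>Z4+uZ4\<close> to that of \<open>Z4\<close> up to
  this twist of the second argument: \<open>\<langle>\<phi> x, \<phi> y\<rangle> = a + b\<close> where \<open>\<langle>x, \<theta> y\<rangle> = a + u b\<close>.\<close>

definition gray_twist :: "zu4 \<Rightarrow> zu4" where
  "gray_twist x = (fst x + 2 * snd x, - snd x)"

lemma gray_twist_gray_twist [simp]: "gray_twist (gray_twist x) = x"
  by (simp add: gray_twist_def prod_eq_iff)

lemma lee_zu_gray_twist [simp]: "lee_zu (gray_twist x) = lee_zu x"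
proof -
  have "fst x + 2 * snd x + - snd x = fst x + snd x"
    by (simp add: algebra_simps mult_2)
  then show ?thesis
    unfolding lee_zu_def gray_twist_def by (simp only: fst_conv snd_conv lee_z4_minus)
qed

lemma z4_inner_gray:
  "length x = length y \<Longrightarrow> z4_inner (gray x) (gray y)
     = fst (zu_inner x (map gray_twist y)) + snd (zu_inner x (map gray_twist y))"
proof (induction x y rule: list_induct2)
  case (Cons a x b y)
  have "snd a * snd b + (fst a + snd a) * (fst b + snd b)
      = fst (zu_mult a (gray_twist b)) + snd (zu_mult a (gray_twist b))"
    by (simp add: gray_twist_def algebra_simps mult_2)
  with Cons show ?case
    by (simp add: gray_def z4_inner_def zu_inner_def algebra_simps)
qed (simp add: gray_def z4_inner_def zu_inner_def)

lemma dual_gray: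
  assumes "linear_code_zu N C"
  shows "dual_z4 (2 * N) (gray ` C) = gray ` map gray_twist ` dual_zu N C"
proof (intro equalityI subsetI)
  fix y assume y: "y \<in> dual_z4 (2 * N) (gray ` C)"
  define w where "w = map gray_twist (gray_inv y)"
  have y_eq: "y = gray (map gray_twist w)"
    using y by (simp add: w_def dual_z4_def comp_def gray_gray_inv)
  have "zu_inner x w = 0" if "x \<in> C" for x
  proof -
    have len: "length x = N" "length (zu_smult (0, 1) x) = N" "length w = N"
      using assms that y_eq y by (auto simp: linear_code_zu_def zu_smult_def dual_z4_def)
    have "zu_smult (0, 1) x \<in> C"
      using assms that by (simp add: linear_code_zu_def)
    then have "z4_inner (gray (zu_smult (0, 1) x)) y = 0" and "z4_inner (gray x) y = 0"
      using y that by (auto simp: dual_z4_def)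
    then have "fst (zu_inner x w) = 0" and "fst (zu_inner x w) + snd (zu_inner x w) = 0"
      using len by (simp_all add: y_eq z4_inner_gray comp_def zu_inner_smult_left)
    then show ?thesis
      by (simp add: prod_eq_iff)
  qed
  moreover have "length w = N"
    using y y_eq by (simp add: dual_z4_def)
  ultimately show "y \<in> gray ` map gray_twist ` dual_zu N C"
    using y_eq by (auto simp: dual_zu_def)
next
  fix y assume "y \<in> gray ` map gray_twist ` dual_zu N C"
  then obtain w where w: "w \<in> dual_zu N C" "y = gray (map gray_twist w)"
    by blast
  have "z4_inner c y = 0" if "c \<in> gray ` C" for c
  proof -
    obtain x where "x \<in> C" "c = gray x"
      using \<open>c \<in> gray ` C\<close> by blast
    moreover have "length x = length w"
      using assms w \<open>x \<in> C\<close> by (auto simp: linear_code_zu_def dual_zu_def)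
    ultimately show ?thesis
      using w by (simp add: z4_inner_gray comp_def dual_zu_def)
  qed
  then show "y \<in> dual_z4 (2 * N) (gray ` C)"
    using w by (simp add: dual_z4_def dual_zu_def)
qed

lemma formally_self_dual_gray:
  assumes "formally_self_dual_zu N C"
  shows "formally_self_dual_z4 (2 * N) (gray ` C)"
  unfolding formally_self_dual_z4_def
proof
  have lin: "linear_code_zu N C" and enum: "same_weight_enum lee_wt_zu C (dual_zu N C)"
    using assms by (simp_all add: formally_self_dual_zu_def)
  show "linear_code_z4 (2 * N) (gray ` C)"
    using lin by (rule linear_code_gray)
  have "same_weight_enum lee_wt_zu (map gray_twist ` dual_zu N C) (dual_zu N C)"
    by (rule same_weight_enum_image)
       (simp_all add: inj_on_inverseI[where g = "map gray_twist"] lee_wt_zu_def comp_def)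
  then have "same_weight_enum lee_wt_zu C (map gray_twist ` dual_zu N C)"
    using enum by (blast intro: same_weight_enum_sym same_weight_enum_trans)
  then show "same_weight_enum lee_wt_z4 (gray ` C) (dual_z4 (2 * N) (gray ` C))"
    unfolding dual_gray[OF lin]
    by (rule same_weight_enum_map_image)
       (simp_all add: inj_on_subset[OF inj_gray] lee_wt_z4_gray)
qed

theorem theorem5p4:
  fixes n :: nat and M :: "nat \<Rightarrow> nat \<Rightarrow> zu4" and \<alpha> \<beta> \<gamma> :: zu4
  assumes "n \<ge> 2"
    and "circulant (n - 1) M"
    and "\<gamma> = \<beta> \<or> \<gamma> = - \<beta>"
  shows "formally_self_dual_zu (2 * n) (code_gen n (2 * n) (gen_matrix n (bordered \<alpha> \<beta> \<gamma> M)))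
       \<and> formally_self_dual_z4 (4 * n)
           (gray ` code_gen n (2 * n) (gen_matrix n (bordered \<alpha> \<beta> \<gamma> M)))"
proof -
  define m where "m = n - 1"
  have n: "n = Suc m" and circ: "circulant m M"
    using assms(1,2) by (simp_all add: m_def)
  interpret signed_involution n "border_reflect m" "\<lambda>i. i = 0 \<and> \<gamma> \<noteq> \<beta>"
    unfolding n by (rule signed_involution_border_reflect)
  have fsd: "formally_self_dual_zu (2 * n) (systematic_code n (bordered \<alpha> \<beta> \<gamma> M))"
    by (rule formally_self_dual_systematic, rule bordered_transpose)
       (use circ assms(3) n in simp_all)
  moreover from fsd
  have "formally_self_dual_z4 (2 * (2 * n)) (gray ` systematic_code n (bordered \<alpha> \<beta> \<gamma> M))"
    by (rule formally_self_dual_gray)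
  moreover have "2 * (2 * n) = 4 * n"
    by simp
  ultimately show ?thesis
    unfolding code_gen_systematic by simp
qed

end
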